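(* Let $A=(i_1,\dots,i_{a-1},k)$ and $B=(k,j_2,\dots,j_b)$ be ordered tuples of distinct elements of $I_d$ whose underlying sets intersect exactly in $\{k\}$. Let $\alpha\in\mathbb{Z}_2^{a,\mathrm{ev}}$, $\beta\in\mathbb{Z}_2^{b,\mathrm{ev}}$ and $r,s\ge0$. Let $A\cup B=(i_1,\dots,i_{a-1},k,j_2,\dots,j_b)$. Then in $R_l[x_1,\dots,x_d]$, $$h^\alpha_r(A)\,h^\beta_s(B)=(-1)^{\alpha_a((b-1)(l-1)+s)}\,h^\gamma_{r+s}(A\cup B),$$ where $\gamma=(\alpha_1,\dots,\alpha_{a-1},\beta_1,\dots,\beta_{b-1},\beta_b+\alpha_a)\in\mathbb{Z}_2^{a+b-1,\mathrm{ev}}$.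
   Context: $l,d\ge1$, $R$ a commutative ring, $I_a=\{1,\dots,a\}$, $R_l[x_1,\dots,x_d]=R[x_1,\dots,x_d]/(x_1^l,\dots,x_d^l)$. For $\alpha\in\mathbb{Z}_2^a$, $|\alpha|=\sum_j\alpha_j$, $\mathbb{Z}_2^{a,\mathrm{ev}}$ is the set of $\alpha$ with $|\alpha|$ even, and $\epsilon^\alpha_j=\prod_{k<j}(-1)^{\alpha_k}$ (so $\epsilon^\alpha_1=1$). For an ordered tuple $A=(i_1,\dots,i_a)$ of distinct elements of $I_d$, $r\ge0$ and $\alpha\in\mathbb{Z}_2^{a,\mathrm{ev}}$, $h^\alpha_r(A)=\sum_{r_1+\dots+r_a=(a-1)(l-1)+r,\ r_j\ge0}\prod_{j=1}^a(\epsilon^\alpha_jx_{i_j})^{r_j}$. *)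

theory Defs
  imports Main "HOL-Library.Poly_Mapping"
begin

type_synonym 'a mpoly = "(nat \<Rightarrow>\<^sub>0 nat) \<Rightarrow>\<^sub>0 'a"

definition Var :: "nat \<Rightarrow> 'a::comm_ring_1 mpoly" where
  "Var i = Poly_Mapping.single (Poly_Mapping.single i 1) 1"

text \<open>Equality in R_l[x_1..x_d] = R[x_1..x_d]/(x_1^l,...,x_d^l): the difference lies in the
  ideal generated by x_1^l, ..., x_d^l.\<close>
definition trunc_eq :: "nat \<Rightarrow> nat \<Rightarrow> 'a::comm_ring_1 mpoly \<Rightarrow> 'a mpoly \<Rightarrow> bool" where
  "trunc_eq l d p q \<longleftrightarrow> (\<exists>c :: nat \<Rightarrow> 'a mpoly. p - q = (\<Sum>i\<in>{1..d}. c i * Var i ^ l))"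

text \<open>Elements of Z_2^a as lists of 0/1 naturals (0-indexed).\<close>
definition Z2vec :: "nat \<Rightarrow> nat list \<Rightarrow> bool" where
  "Z2vec a \<alpha> \<longleftrightarrow> length \<alpha> = a \<and> (\<forall>x\<in>set \<alpha>. x < 2)"

definition Z2ev :: "nat \<Rightarrow> nat list \<Rightarrow> bool" where
  "Z2ev a \<alpha> \<longleftrightarrow> Z2vec a \<alpha> \<and> even (sum_list \<alpha>)"

text \<open>eps \<alpha> j = prod_{k<j} (-1)^{alpha_k} (0-indexed j, so eps \<alpha> 0 = 1).\<close>
definition eps :: "nat list \<Rightarrow> nat \<Rightarrow> 'a::comm_ring_1" where
  "eps \<alpha> j = (\<Prod>k<j. (-1) ^ (\<alpha> ! k))"

definition hpoly :: "nat \<Rightarrow> nat list \<Rightarrow> nat \<Rightarrow> nat list \<Rightarrow> 'a::comm_ring_1 mpoly" where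
  "hpoly l \<alpha> r A =
     (\<Sum>rs\<in>{rs. length rs = length A \<and> sum_list rs = (length A - 1) * (l - 1) + r}.
        \<Prod>j<length A. (Poly_Mapping.single 0 (eps \<alpha> j) * Var (A ! j)) ^ (rs ! j))"

end

theory Submission imports Defs begin

text \<open>Expanding the product, a pair of exponent vectors (rs, ts) of the two factors contributes
  the monomial whose exponent vector glues rs and ts along the shared variable x_k, up to a sign
  depending only on the total degree of the B-part: every variable of B acquires the extra factor
  eps^alpha_a = (-1)^alpha_a, because alpha has even weight. Gluing is injective, and an exponent
  vector of h^gamma_{r+s}(A \<union> B) all of whose entries are below l can be cut at the position
  of x_k into exponent vectors of the two factors, since the degrees (a-1)(l-1)+r and
  (b-1)(l-1)+s dominate the parts before and after x_k. All other monomials of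
  h^gamma_{r+s}(A \<union> B) contain some x_i^l and vanish in R_l[x_1,...,x_d].\<close>

definition trunc_ideal :: "nat \<Rightarrow> nat \<Rightarrow> 'a::comm_ring_1 mpoly set" where
  "trunc_ideal l d = {p. \<exists>c. p = (\<Sum>i\<in>{1..d}. c i * Var i ^ l)}"

lemma trunc_eq_iff_diff_mem: "trunc_eq l d p q \<longleftrightarrow> p - q \<in> trunc_ideal l d"
  by (simp add: trunc_eq_def trunc_ideal_def)

lemma trunc_ideal_zero: "0 \<in> trunc_ideal l d"
  unfolding trunc_ideal_def by (auto intro: exI[of _ "\<lambda>_. 0"])

lemma trunc_ideal_add: "p \<in> trunc_ideal l d \<Longrightarrow> q \<in> trunc_ideal l d \<Longrightarrow> p + q \<in> trunc_ideal l d"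
proof -
  assume "p \<in> trunc_ideal l d" "q \<in> trunc_ideal l d"
  then obtain c1 c2 where "p = (\<Sum>i\<in>{1..d}. c1 i * Var i ^ l)" "q = (\<Sum>i\<in>{1..d}. c2 i * Var i ^ l)"
    by (auto simp: trunc_ideal_def)
  then have "p + q = (\<Sum>i\<in>{1..d}. (c1 i + c2 i) * Var i ^ l)"
    by (simp add: sum.distrib distrib_right)
  then show ?thesis by (auto simp: trunc_ideal_def)
qed

lemma trunc_ideal_mult_left: "p \<in> trunc_ideal l d \<Longrightarrow> q * p \<in> trunc_ideal l d"
proof -
  assume "p \<in> trunc_ideal l d"
  then obtain c where "p = (\<Sum>i\<in>{1..d}. c i * Var i ^ l)"
    by (auto simp: trunc_ideal_def)
  then have "q * p = (\<Sum>i\<in>{1..d}. (q * c i) * Var i ^ l)"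
    by (simp add: sum_distrib_left mult.assoc)
  then show ?thesis by (auto simp: trunc_ideal_def)
qed

lemma trunc_ideal_sum:
  "finite S \<Longrightarrow> (\<And>x. x \<in> S \<Longrightarrow> f x \<in> trunc_ideal l d) \<Longrightarrow> sum f S \<in> trunc_ideal l d"
  by (induction S rule: finite_induct) (auto intro: trunc_ideal_zero trunc_ideal_add)

lemma trunc_ideal_Var_power:
  assumes "i \<in> {1..d}"
  shows "q * Var i ^ l \<in> trunc_ideal l d"
  unfolding trunc_ideal_def mem_Collect_eq
proof (rule exI[of _ "\<lambda>j. if j = i then q else 0"])
  have "(\<Sum>j\<in>{1..d}. (if j = i then q else 0) * Var j ^ l) = (\<Sum>j\<in>{1..d}. if j = i then q * Var j ^ l else 0)"
    by (rule sum.cong) auto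
  also have "\<dots> = q * Var i ^ l"
    using assms by (simp add: sum.delta)
  finally show "q * Var i ^ l = (\<Sum>j\<in>{1..d}. (if j = i then q else 0) * Var j ^ l)"
    by (rule sym)
qed

definition compositions :: "nat \<Rightarrow> nat \<Rightarrow> nat list set" where
  "compositions L N = {rs. length rs = L \<and> sum_list rs = N}"

lemma finite_compositions: "finite (compositions L N)"
proof (rule finite_subset)
  show "compositions L N \<subseteq> {xs. set xs \<subseteq> {0..N} \<and> length xs = L}"
    by (auto simp: compositions_def member_le_sum_list)
  show "finite {xs. set xs \<subseteq> {0..N} \<and> length xs = L}"
    by (rule finite_lists_length_eq) simp
qed

lemma compositions_Suc_snoc:
  assumes "rs \<in> compositions (Suc n) N"
  obtains rs0 x where "rs = rs0 @ [x]" "length rs0 = n" "sum_list rs0 + x = N"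
  using assms by (cases rs rule: rev_cases) (auto simp: compositions_def)

lemma compositions_Suc_Cons:
  assumes "ts \<in> compositions (Suc m) N"
  obtains y ts1 where "ts = y # ts1" "length ts1 = m" "y + sum_list ts1 = N"
  using assms by (cases ts) (auto simp: compositions_def)

text \<open>The last entry of rs and the first entry of ts are both exponents of the shared variable.\<close>

definition glue :: "nat list \<Rightarrow> nat list \<Rightarrow> nat list" where
  "glue rs ts = butlast rs @ [last rs + hd ts] @ tl ts"

lemma glue_snoc_Cons [simp]: "glue (rs0 @ [x]) (y # ts1) = rs0 @ [x + y] @ ts1"
  by (simp add: glue_def)

lemma glue_mem_compositions:
  "rs \<in> compositions (Suc n) NA \<Longrightarrow> ts \<in> compositions (Suc m) NB \<Longrightarrow>
    glue rs ts \<in> compositions (Suc (n + m)) (NA + NB)"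
  by (elim compositions_Suc_snoc compositions_Suc_Cons) (auto simp: compositions_def)

lemma inj_on_glue: "inj_on (\<lambda>(rs, ts). glue rs ts) (compositions (Suc n) NA \<times> compositions (Suc m) NB)"
proof (rule inj_onI, clarify)
  fix rs ts rs' ts'
  assume "rs \<in> compositions (Suc n) NA" "ts \<in> compositions (Suc m) NB"
    "rs' \<in> compositions (Suc n) NA" "ts' \<in> compositions (Suc m) NB"
    and glue_eq: "glue rs ts = glue rs' ts'"
  then obtain rs0 x y ts1 rs0' x' y' ts1' where
    rs: "rs = rs0 @ [x]" "length rs0 = n" "sum_list rs0 + x = NA" and
    ts: "ts = y # ts1" "y + sum_list ts1 = NB" and
    rs': "rs' = rs0' @ [x']" "length rs0' = n" "sum_list rs0' + x' = NA" and
    ts': "ts' = y' # ts1'" "y' + sum_list ts1' = NB"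
    by (elim compositions_Suc_snoc compositions_Suc_Cons)
  from glue_eq have "rs0 = rs0'" "ts1 = ts1'"
    using rs(1,2) ts(1) rs'(1,2) ts'(1) by simp_all
  with rs ts rs' ts' show "rs = rs' \<and> ts = ts'"
    by simp
qed

lemma sum_list_le_length_mult: "(\<And>x. x \<in> set xs \<Longrightarrow> x \<le> c) \<Longrightarrow> sum_list xs \<le> length xs * c"
  by (induction xs) (auto intro: add_mono)

text \<open>Cut u right after its first n entries; the bound c makes both remainders nonnegative.\<close>

lemma bounded_composition_in_glue_image:
  assumes u: "u \<in> compositions (Suc (n + m)) (NA + NB)" and bound: "\<And>x. x \<in> set u \<Longrightarrow> x \<le> c"
    and NA: "n * c \<le> NA" and NB: "m * c \<le> NB"
  shows "u \<in> (\<lambda>(rs, ts). glue rs ts) ` (compositions (Suc n) NA \<times> compositions (Suc m) NB)"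
proof -
  define u0 x u1 where "u0 = take n u" and "x = u ! n" and "u1 = drop (Suc n) u"
  have len: "length u0 = n" "length u1 = m"
    using u by (auto simp: compositions_def u0_def u1_def)
  have u_split: "u = u0 @ [x] @ u1"
    using u by (simp add: compositions_def u0_def x_def u1_def id_take_nth_drop[symmetric])
  then have bound_u0: "sum_list u0 \<le> n * c" and bound_u1: "sum_list u1 \<le> m * c"
    using sum_list_le_length_mult[of u0 c] sum_list_le_length_mult[of u1 c] bound len by auto
  have "sum_list u0 + x + sum_list u1 = NA + NB"
    using u by (subst (asm) u_split) (simp add: compositions_def)
  then have "u = glue (u0 @ [NA - sum_list u0]) ((NB - sum_list u1) # u1)"
    using u_split bound_u0 bound_u1 NA NB by simp
  moreover have "u0 @ [NA - sum_list u0] \<in> compositions (Suc n) NA"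
    "(NB - sum_list u1) # u1 \<in> compositions (Suc m) NB"
    using len bound_u0 bound_u1 NA NB by (auto simp: compositions_def)
  ultimately show ?thesis by blast
qed

lemma large_entry_outside_glue_image:
  assumes "u \<in> compositions (Suc (n + m)) (NA + NB)"
    and "u \<notin> (\<lambda>(rs, ts). glue rs ts) ` (compositions (Suc n) NA \<times> compositions (Suc m) NB)"
    and "n * (l - 1) \<le> NA" "m * (l - 1) \<le> NB"
  shows "\<exists>j<length u. l \<le> u ! j"
proof (rule ccontr)
  assume "\<not> ?thesis"
  then have "x \<le> l - 1" if "x \<in> set u" for x
    using that by (auto simp: in_set_conv_nth)
  then show False
    using bounded_composition_in_glue_image[of u n m NA NB "l - 1"] assms by blast
qed

lemma eps_cong: "(\<And>i. i < j \<Longrightarrow> \<gamma> ! i = \<alpha> ! i) \<Longrightarrow> eps \<gamma> j = eps \<alpha> j"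
  unfolding eps_def by (rule prod.cong) auto

lemma prod_lessThan_add: "(\<Prod>j<n + m. g j) = (\<Prod>j<n. g j) * (\<Prod>i<m. g (n + i))"
  for g :: "nat \<Rightarrow> 'b::comm_monoid_mult"
  by (induction m) (auto simp: ac_simps)

lemma eps_add:
  assumes "\<And>i. i < n \<Longrightarrow> \<gamma> ! i = \<alpha> ! i" "\<And>i. i < j \<Longrightarrow> \<gamma> ! (n + i) = \<beta> ! i"
  shows "eps \<gamma> (n + j) = (eps \<alpha> n * eps \<beta> j :: 'a::comm_ring_1)"
  unfolding eps_def prod_lessThan_add using assms
  by (intro arg_cong2[where f="(*)"] prod.cong) auto

lemma eps_butlast_of_even:
  assumes "length \<alpha> = Suc n" "even (sum_list \<alpha>)"
  shows "eps \<alpha> n = ((-1) ^ last \<alpha> :: 'a::comm_ring_1)"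
proof -
  have last: "last \<alpha> = \<alpha> ! n"
    using assms(1) by (cases \<alpha> rule: rev_cases) (auto simp: nth_append)
  have "eps \<alpha> (Suc n) = ((-1) ^ (\<Sum>k<Suc n. \<alpha> ! k) :: 'a)"
    unfolding eps_def by (simp only: power_sum)
  also have "(\<Sum>k<Suc n. \<alpha> ! k) = sum_list \<alpha>"
    using assms(1) by (simp add: sum_list_sum_nth atLeast0LessThan)
  finally have "eps \<alpha> (Suc n) = ((-1) ^ sum_list \<alpha> :: 'a)" .
  then have "eps \<alpha> n * (-1) ^ last \<alpha> = (1 :: 'a)"
    using assms(2) last by (simp add: eps_def)
  then have "eps \<alpha> n * ((-1) ^ last \<alpha> * (-1) ^ last \<alpha>) = ((-1) ^ last \<alpha> :: 'a)"
    by (metis mult.assoc mult_1)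
  moreover have "(-1) ^ last \<alpha> * (-1) ^ last \<alpha> = (1 :: 'a)"
    by (simp flip: power_mult_distrib)
  ultimately show ?thesis by simp
qed

lemma single0_power: "(Poly_Mapping.single 0 c :: 'a::comm_ring_1 mpoly) ^ n = Poly_Mapping.single 0 (c ^ n)"
  by (induction n) (auto simp: mult_single)

lemma single0_mult:
  "(Poly_Mapping.single 0 a :: 'a::comm_ring_1 mpoly) * Poly_Mapping.single 0 b = Poly_Mapping.single 0 (a * b)"
  by (simp add: mult_single)

definition hmonom :: "nat list \<Rightarrow> nat list \<Rightarrow> nat list \<Rightarrow> 'a::comm_ring_1 mpoly" where
  "hmonom \<alpha> A rs = (\<Prod>j<length A. (Poly_Mapping.single 0 (eps \<alpha> j) * Var (A ! j)) ^ (rs ! j))"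

lemma hpoly_eq_sum_hmonom:
  "hpoly l \<alpha> r A = sum (hmonom \<alpha> A) (compositions (length A) ((length A - 1) * (l - 1) + r))"
  unfolding hpoly_def hmonom_def compositions_def by simp

lemma hmonom_mem_trunc_ideal:
  assumes "j < length A" "l \<le> rs ! j" "set A \<subseteq> {1..d}"
  shows "hmonom \<alpha> A rs \<in> trunc_ideal l d"
proof -
  let ?c = "Poly_Mapping.single 0 (eps \<alpha> j) :: 'a mpoly"
  let ?f = "\<lambda>j. (Poly_Mapping.single 0 (eps \<alpha> j) * Var (A ! j)) ^ (rs ! j) :: 'a mpoly"
  obtain e where e: "rs ! j = e + l"
    using assms(2) le_Suc_ex by (metis add.commute)
  have "?f j = ((?c * Var (A ! j)) ^ e * ?c ^ l) * Var (A ! j) ^ l"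
    unfolding e by (simp add: power_add power_mult_distrib mult.assoc)
  then have "hmonom \<alpha> A rs = ((\<Prod>i\<in>{..<length A} - {j}. ?f i) * ((?c * Var (A ! j)) ^ e * ?c ^ l))
      * Var (A ! j) ^ l"
    unfolding hmonom_def using assms(1) by (subst prod.remove[of _ j]) (auto simp: mult.assoc)
  moreover have "A ! j \<in> {1..d}"
    using assms(1,3) nth_mem by blast
  ultimately show ?thesis
    by (simp only: trunc_ideal_Var_power)
qed

lemma hmonom_glue:
  fixes rs0 ts1 As Bs :: "nat list"
  assumes len: "length rs0 = length As" "length ts1 = length Bs"
    and \<gamma>_As: "\<And>i. i < length As \<Longrightarrow> \<gamma> ! i = \<alpha> ! i"
    and \<gamma>_Bs: "\<And>i. i < length Bs \<Longrightarrow> \<gamma> ! (length As + i) = \<beta> ! i"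
  shows "(hmonom \<gamma> (As @ [k] @ Bs) (rs0 @ [x + y] @ ts1) :: 'a::comm_ring_1 mpoly)
       = Poly_Mapping.single 0 (eps \<alpha> (length As) ^ (y + sum_list ts1))
         * hmonom \<alpha> (As @ [k]) (rs0 @ [x]) * hmonom \<beta> (k # Bs) (y # ts1)"
proof -
  define n m where "n = length As" and "m = length Bs"
  define E :: 'a where "E = eps \<alpha> n"
  let ?S = "\<lambda>c. Poly_Mapping.single 0 c :: 'a mpoly"
  let ?fa = "\<lambda>j. (?S (eps \<alpha> j) * Var (As ! j)) ^ (rs0 ! j)"
  let ?fb = "\<lambda>i. ?S (eps \<beta> (Suc i)) * Var (Bs ! i)"
  have eps_\<gamma>_As: "eps \<gamma> j = eps \<alpha> j" if "j \<le> n" for j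
    using that \<gamma>_As by (intro eps_cong) (auto simp: n_def)
  have eps_\<gamma>_Bs: "eps \<gamma> (Suc (length As + i)) = E * eps \<beta> (Suc i)" if "i < m" for i
    using that \<gamma>_As \<gamma>_Bs eps_add[of n \<gamma> \<alpha> "Suc i" \<beta>] by (simp add: E_def n_def m_def)
  have "length (As @ [k] @ Bs) = Suc n + m" by (simp add: n_def m_def)
  then have "hmonom \<gamma> (As @ [k] @ Bs) (rs0 @ [x + y] @ ts1) =
      (\<Prod>j<Suc n. (?S (eps \<gamma> j) * Var ((As @ [k] @ Bs) ! j)) ^ ((rs0 @ [x + y] @ ts1) ! j))
      * (\<Prod>i<m. (?S (eps \<gamma> (Suc n + i)) * Var ((As @ [k] @ Bs) ! (Suc n + i)))
          ^ ((rs0 @ [x + y] @ ts1) ! (Suc n + i)))"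
    unfolding hmonom_def by (simp only: prod_lessThan_add)
  also have "(\<Prod>j<Suc n. (?S (eps \<gamma> j) * Var ((As @ [k] @ Bs) ! j)) ^ ((rs0 @ [x + y] @ ts1) ! j))
      = (\<Prod>j<n. ?fa j) * (?S E * Var k) ^ (x + y)"
    unfolding prod.lessThan_Suc using len
    by (intro arg_cong2[where f="(*)"] prod.cong) (auto simp: eps_\<gamma>_As E_def n_def nth_append)
  also have "(\<Prod>i<m. (?S (eps \<gamma> (Suc n + i)) * Var ((As @ [k] @ Bs) ! (Suc n + i)))
          ^ ((rs0 @ [x + y] @ ts1) ! (Suc n + i)))
      = (\<Prod>i<m. (?S E * ?fb i) ^ (ts1 ! i))"
    using len by (intro prod.cong)
      (auto simp: eps_\<gamma>_Bs n_def nth_append single0_mult[symmetric] mult.assoc)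
  also have "(\<Prod>i<m. (?S E * ?fb i) ^ (ts1 ! i)) = ?S E ^ (\<Sum>i<m. ts1 ! i) * (\<Prod>i<m. ?fb i ^ (ts1 ! i))"
    by (simp only: power_mult_distrib prod.distrib power_sum)
  also have "(\<Sum>i<m. ts1 ! i) = sum_list ts1"
    using len by (simp add: sum_list_sum_nth m_def atLeast0LessThan)
  moreover have "hmonom \<alpha> (As @ [k]) (rs0 @ [x]) = (\<Prod>j<n. ?fa j) * (?S E * Var k) ^ x"
    unfolding hmonom_def using len by (simp add: n_def E_def nth_append)
  moreover have "hmonom \<beta> (k # Bs) (y # ts1) = Var k ^ y * (\<Prod>i<m. ?fb i ^ (ts1 ! i))"
    unfolding hmonom_def length_Cons prod.lessThan_Suc_shift
    by (simp add: m_def eps_def del: prod.lessThan_Suc)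
  ultimately show ?thesis
    by (simp add: E_def n_def power_mult_distrib power_add single0_power[symmetric]
        single0_mult[symmetric] ac_simps)
qed

lemma hmonom_mult_hmonom:
  assumes \<alpha>: "length \<alpha> = Suc (length As)" "even (sum_list \<alpha>)"
    and \<gamma>_As: "\<And>i. i < length As \<Longrightarrow> \<gamma> ! i = \<alpha> ! i"
    and \<gamma>_Bs: "\<And>i. i < length Bs \<Longrightarrow> \<gamma> ! (length As + i) = \<beta> ! i"
    and rs: "rs \<in> compositions (Suc (length As)) NA" and ts: "ts \<in> compositions (Suc (length Bs)) NB"
  shows "(hmonom \<alpha> (As @ [k]) rs * hmonom \<beta> (k # Bs) ts :: 'a::comm_ring_1 mpoly)
    = Poly_Mapping.single 0 ((-1) ^ (last \<alpha> * NB)) * hmonom \<gamma> (As @ [k] @ Bs) (glue rs ts)"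
proof -
  let ?\<sigma> = "(-1) ^ (last \<alpha> * NB) :: 'a"
  obtain rs0 x where rs: "rs = rs0 @ [x]" "length rs0 = length As"
    using rs by (elim compositions_Suc_snoc)
  obtain y ts1 where ts: "ts = y # ts1" "length ts1 = length Bs" "y + sum_list ts1 = NB"
    using ts by (elim compositions_Suc_Cons)
  have glued: "hmonom \<gamma> (As @ [k] @ Bs) (glue rs ts)
      = Poly_Mapping.single 0 ?\<sigma> * (hmonom \<alpha> (As @ [k]) rs * hmonom \<beta> (k # Bs) ts)"
    using hmonom_glue[where k=k and x=x and y=y, OF rs(2) ts(2) \<gamma>_As \<gamma>_Bs] rs ts
    by (simp add: eps_butlast_of_even[OF \<alpha>] power_mult mult.assoc)
  have "Poly_Mapping.single 0 ?\<sigma> * hmonom \<gamma> (As @ [k] @ Bs) (glue rs ts)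
      = (Poly_Mapping.single 0 ?\<sigma> * Poly_Mapping.single 0 ?\<sigma>) * (hmonom \<alpha> (As @ [k]) rs * hmonom \<beta> (k # Bs) ts)"
    unfolding glued by (rule mult.assoc[symmetric])
  also have "Poly_Mapping.single 0 ?\<sigma> * Poly_Mapping.single 0 ?\<sigma> = (1 :: 'a mpoly)"
    by (simp add: single0_mult flip: power_mult_distrib)
  finally show ?thesis
    by simp
qed

lemma hpoly_mult_hpoly:
  assumes \<alpha>: "length \<alpha> = Suc (length As)" "even (sum_list \<alpha>)"
    and \<gamma>_As: "\<And>i. i < length As \<Longrightarrow> \<gamma> ! i = \<alpha> ! i"
    and \<gamma>_Bs: "\<And>i. i < length Bs \<Longrightarrow> \<gamma> ! (length As + i) = \<beta> ! i"
  shows "(hpoly l \<alpha> r (As @ [k]) * hpoly l \<beta> s (k # Bs) :: 'a::comm_ring_1 mpoly)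
    = Poly_Mapping.single 0 ((-1) ^ (last \<alpha> * (length Bs * (l - 1) + s)))
      * sum (hmonom \<gamma> (As @ [k] @ Bs)) ((\<lambda>(rs, ts). glue rs ts) `
          (compositions (Suc (length As)) (length As * (l - 1) + r)
            \<times> compositions (Suc (length Bs)) (length Bs * (l - 1) + s)))"
    (is "_ = Poly_Mapping.single 0 ?\<sigma> * sum _ (_ ` ?P)")
proof -
  have "hpoly l \<alpha> r (As @ [k]) * hpoly l \<beta> s (k # Bs)
      = (\<Sum>(rs, ts)\<in>?P. hmonom \<alpha> (As @ [k]) rs * hmonom \<beta> (k # Bs) ts :: 'a mpoly)"
    unfolding hpoly_eq_sum_hmonom sum_product sum.cartesian_product by simp
  also have "\<dots> = (\<Sum>(rs, ts)\<in>?P. Poly_Mapping.single 0 ?\<sigma> * hmonom \<gamma> (As @ [k] @ Bs) (glue rs ts))"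
    using hmonom_mult_hmonom[OF \<alpha> \<gamma>_As \<gamma>_Bs] by (intro sum.cong) auto
  also have "\<dots> = Poly_Mapping.single 0 ?\<sigma> * (\<Sum>(rs, ts)\<in>?P. hmonom \<gamma> (As @ [k] @ Bs) (glue rs ts))"
    by (simp add: sum_distrib_left case_prod_unfold)
  also have "(\<Sum>(rs, ts)\<in>?P. hmonom \<gamma> (As @ [k] @ Bs) (glue rs ts))
      = sum (hmonom \<gamma> (As @ [k] @ Bs)) ((\<lambda>(rs, ts). glue rs ts) ` ?P)"
    unfolding sum.reindex[OF inj_on_glue] by (simp add: comp_def case_prod_unfold)
  finally show ?thesis .
qed

lemma sum_hmonom_mem_trunc_ideal:
  assumes "set A \<subseteq> {1..d}" "finite S" and "\<And>u. u \<in> S \<Longrightarrow> \<exists>j<length A. l \<le> u ! j"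
  shows "sum (hmonom \<alpha> A) S \<in> trunc_ideal l d"
proof (rule trunc_ideal_sum[OF assms(2)])
  fix u assume "u \<in> S"
  with assms(3) obtain j where "j < length A" "l \<le> u ! j" by blast
  then show "hmonom \<alpha> A u \<in> trunc_ideal l d" using assms(1) by (rule hmonom_mem_trunc_ideal)
qed

theorem mainTheorem13:
  fixes l d :: nat and As Bs :: "nat list" and k :: nat and \<alpha> \<beta> :: "nat list" and r s :: nat
  assumes "l \<ge> 1" and "d \<ge> 1"
    and "distinct (As @ [k])" and "set (As @ [k]) \<subseteq> {1..d}"
    and "distinct (k # Bs)" and "set (k # Bs) \<subseteq> {1..d}"
    and "set (As @ [k]) \<inter> set (k # Bs) = {k}"
    and "Z2ev (length As + 1) \<alpha>" and "Z2ev (length Bs + 1) \<beta>"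
  shows "trunc_eq l d
           (hpoly l \<alpha> r (As @ [k]) * hpoly l \<beta> s (k # Bs) :: 'a::comm_ring_1 mpoly)
           (Poly_Mapping.single 0 ((-1) ^ (last \<alpha> * ((length Bs) * (l - 1) + s)))
              * hpoly l (butlast \<alpha> @ butlast \<beta> @ [(last \<beta> + last \<alpha>) mod 2]) (r + s) (As @ [k] @ Bs))"
proof -
  define \<gamma> where "\<gamma> = butlast \<alpha> @ butlast \<beta> @ [(last \<beta> + last \<alpha>) mod 2]"
  define NA NB where "NA = length As * (l - 1) + r" and "NB = length Bs * (l - 1) + s"
  define glued where "glued = (\<lambda>(rs, ts). glue rs ts) `
    (compositions (Suc (length As)) NA \<times> compositions (Suc (length Bs)) NB)"
  define all where "all = compositions (Suc (length As + length Bs)) (NA + NB)"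
  let ?C = "As @ [k] @ Bs" and ?\<sigma> = "Poly_Mapping.single 0 ((-1) ^ (last \<alpha> * NB)) :: 'a mpoly"
  have \<alpha>: "length \<alpha> = Suc (length As)" "even (sum_list \<alpha>)" and \<beta>: "length \<beta> = Suc (length Bs)"
    using assms(8,9) by (auto simp: Z2ev_def Z2vec_def)
  have \<gamma>_As: "\<gamma> ! i = \<alpha> ! i" if "i < length As" for i
    using that \<alpha> by (simp add: \<gamma>_def nth_append nth_butlast)
  have \<gamma>_Bs: "\<gamma> ! (length As + i) = \<beta> ! i" if "i < length Bs" for i
    using that \<alpha> \<beta> by (simp add: \<gamma>_def nth_append nth_butlast)
  have product: "hpoly l \<alpha> r (As @ [k]) * hpoly l \<beta> s (k # Bs) = ?\<sigma> * sum (hmonom \<gamma> ?C) glued"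
    unfolding glued_def NA_def NB_def by (rule hpoly_mult_hpoly[OF \<alpha> \<gamma>_As \<gamma>_Bs])
  have "glued \<subseteq> all"
    by (auto simp: glued_def all_def intro: glue_mem_compositions)
  then have split: "hpoly l \<gamma> (r + s) ?C = sum (hmonom \<gamma> ?C) (all - glued) + sum (hmonom \<gamma> ?C) glued"
    unfolding hpoly_eq_sum_hmonom by (simp add: sum.subset_diff finite_compositions all_def NA_def NB_def algebra_simps)
  have "\<exists>j<length ?C. l \<le> u ! j" if "u \<in> all - glued" for u
  proof -
    have "length u = length ?C"
      using that by (simp add: all_def compositions_def)
    with that show ?thesis
      using large_entry_outside_glue_image[of u "length As" "length Bs" NA NB l]
      by (auto simp: all_def glued_def NA_def NB_def)
  qed
  then have "sum (hmonom \<gamma> ?C) (all - glued) \<in> trunc_ideal l d"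
    using assms(4,6) by (intro sum_hmonom_mem_trunc_ideal) (auto simp: all_def finite_compositions)
  then have "- ?\<sigma> * sum (hmonom \<gamma> ?C) (all - glued) \<in> trunc_ideal l d"
    by (rule trunc_ideal_mult_left)
  then show ?thesis
    unfolding trunc_eq_iff_diff_mem product split \<gamma>_def[symmetric] NB_def[symmetric]
    by (simp add: algebra_simps)
qed

end
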